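(* Under algorithm ERGO with $\kappa\le1/18$ and $\epsilon<1/12$, for every iteration $i\ge0$, $B_i\le N_i/(18(1-\epsilon))$, where $B_i$ and $N_i$ denote respectively the number of bad IDs and the total number of IDs in the system at the end of iteration $i$.
   Context: Resource model. IDs are good (follow the protocol) or bad (controlled by a single adversary). A $k$-hard challenge imposes a cost $k$ on its solver. A round is the time to solve a $1$-hard challenge plus communication with the server. In any single round in which all IDs are solving challenges, the adversary can solve at most a $\kappa$-fraction of the challenges. In any round, at most an $\epsilon$-fraction of the good IDs depart. Joins and departures occur at distinct times; every joining ID is new. ERGO (run by a server, with GoodJEst running in parallel and providing a current estimate $\tilde J$ of the good join rate): initially, the system consists of the IDs that returned a valid solution to a $1$-hard challenge (this is the end of iteration $0$). Each subsequent iteration starts at some time $\tau$ with system $S(\tau)$; during it, every joining ID must solve a challenge of hardness $1$ plus the number of IDs that joined in the last $1/\tilde J$ seconds of the current iteration (the entrance cost). When the number of joining plus departing IDs in the iteration exceeds $|S(\tau)|/11$, a purge is performed: all IDs are issued a $1$-hard challenge, the system is reset to the IDs that solve it within one round, and the next iteration begins. *)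

theory Defs
  imports Complex_Main
begin

text \<open>IDs are of an arbitrary type 'id; the set good contains the good IDs,
  every other ID is bad (controlled by the adversary).\<close>

datatype 'id event = Join 'id | Depart 'id

fun apply_event :: "'id event \<Rightarrow> 'id set \<Rightarrow> 'id set" where
  "apply_event (Join x) S = insert x S"
| "apply_event (Depart x) S = S - {x}"

fun valid_events :: "'id set \<Rightarrow> 'id event list \<Rightarrow> bool" where
  "valid_events S [] = True"
| "valid_events S (Join x # es) = (x \<notin> S \<and> valid_events (insert x S) es)"
| "valid_events S (Depart x # es) = (x \<in> S \<and> valid_events (S - {x}) es)"

definition joined :: "'id event list \<Rightarrow> 'id list" where
  "joined es = [x. Join x \<leftarrow> es]"

text \<open>A single round in which every ID of issued is given a 1-hard challenge.
  solvers: IDs returning a valid solution within the round;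
  departs: good IDs that depart during the round.
  Resource model: good IDs follow the protocol (every good ID that does not depart
  solves the challenge within the round); at most an eps-fraction of the good IDs
  depart in the round; the adversary solves at most a kappa-fraction of the
  challenges solved when all IDs are solving (good challenges counted for all good
  IDs issued a challenge).\<close>
record 'id chround =
  issued :: "'id set"
  solvers :: "'id set"
  departs :: "'id set"

definition challenge_round :: "'id set \<Rightarrow> real \<Rightarrow> real \<Rightarrow> 'id chround \<Rightarrow> bool" where
  "challenge_round good \<kappa> \<epsilon> r \<longleftrightarrow>
     finite (issued r) \<and> solvers r \<subseteq> issued r \<and>
     departs r \<subseteq> issued r \<inter> good \<and> solvers r \<inter> departs r = {} \<and>
     (issued r \<inter> good) - departs r \<subseteq> solvers r \<and>
     real (card (departs r)) \<le> \<epsilon> * real (card (issued r \<inter> good)) \<and>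
     real (card (solvers r - good))
        \<le> \<kappa> * (real (card (issued r \<inter> good)) + real (card (solvers r - good)))"

text \<open>An execution of ERGO with m+1 completed iterations 0..m.
  sys i : the system at the end of iteration i;
  evs (i+1) : the join/departure events of iteration i+1 (in order), up to and
    including the one triggering the purge;
  pr i : the challenge round ending iteration i (the initial 1-hard challenge for
    i = 0, the purge for i \<ge> 1).\<close>
definition ergo_run ::
  "'id set \<Rightarrow> real \<Rightarrow> real \<Rightarrow> nat \<Rightarrow> (nat \<Rightarrow> 'id set) \<Rightarrow> (nat \<Rightarrow> 'id event list)
     \<Rightarrow> (nat \<Rightarrow> 'id chround) \<Rightarrow> bool" where
  "ergo_run good \<kappa> \<epsilon> m sys evs pr \<longleftrightarrow>
     challenge_round good \<kappa> \<epsilon> (pr 0) \<and> sys 0 = solvers (pr 0) \<and>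
     (\<forall>i<m.
        valid_events (sys i) (evs (Suc i)) \<and>
        distinct (joined (evs (Suc i))) \<and>
        (\<forall>x \<in> set (joined (evs (Suc i))). \<forall>j\<le>i. x \<notin> issued (pr j)) \<and>
        real (length (evs (Suc i))) > real (card (sys i)) / 11 \<and>
        real (length (evs (Suc i)) - 1) \<le> real (card (sys i)) / 11 \<and>
        issued (pr (Suc i)) = fold apply_event (evs (Suc i)) (sys i) \<and>
        challenge_round good \<kappa> \<epsilon> (pr (Suc i)) \<and>
        sys (Suc i) = solvers (pr (Suc i)))"

end

theory Submission
  imports Defs
begin

text \<open>Every iteration ends with a one-round 1-hard challenge, and the system becomes the set of
  its solvers. If G good IDs were challenged, at least (1 - \<epsilon>) G of them solve it, while the
  adversary solves at most a \<kappa>-fraction of the G + B solved challenges, so B \<le> G / 17 when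
  \<kappa> \<le> 1/18. Hence N \<ge> B + (1 - \<epsilon>) G \<ge> 18 (1 - \<epsilon>) B.\<close>

lemma challenge_round_card_solvers_ge:
  assumes "challenge_round good \<kappa> \<epsilon> r"
  shows "real (card (solvers r - good)) + (1 - \<epsilon>) * real (card (issued r \<inter> good))
           \<le> real (card (solvers r))"
proof -
  have fin: "finite (issued r)" and sub: "solvers r \<subseteq> issued r"
    and dsub: "departs r \<subseteq> issued r \<inter> good"
    and gs: "(issued r \<inter> good) - departs r \<subseteq> solvers r \<inter> good"
    and dep: "real (card (departs r)) \<le> \<epsilon> * real (card (issued r \<inter> good))"
    using assms unfolding challenge_round_def by auto
  have fs: "finite (solvers r)"
    using fin sub by (rule finite_subset[rotated])
  have split: "card (solvers r) = card (solvers r - good) + card (solvers r \<inter> good)"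
    using card_Int_Diff[OF fs, of good] by simp
  have "card (issued r \<inter> good) - card (departs r) \<le> card (solvers r \<inter> good)"
    using card_mono[OF _ gs] fs card_Diff_subset[OF finite_subset[OF dsub] dsub] fin by auto
  moreover have "card (departs r) \<le> card (issued r \<inter> good)"
    using dsub fin by (simp add: card_mono)
  ultimately show ?thesis
    using split dep by (simp add: algebra_simps of_nat_diff)
qed

lemma bad_fraction_bound:
  fixes B G N \<kappa> \<epsilon> :: real
  assumes "0 \<le> B" and "0 \<le> G" and "\<kappa> \<le> 1/18" and "0 \<le> \<epsilon>" and "\<epsilon> < 1"
    and adversary: "B \<le> \<kappa> * (G + B)"
    and solvers: "B + (1 - \<epsilon>) * G \<le> N"
  shows "B \<le> N / (18 * (1 - \<epsilon>))"
proof -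
  have "\<kappa> * (G + B) \<le> (1/18) * (G + B)"
    using assms by (intro mult_right_mono) auto
  then have "17 * B \<le> G"
    using adversary by simp
  then have "(1 - \<epsilon>) * (17 * B) \<le> (1 - \<epsilon>) * G"
    using assms by (intro mult_left_mono) auto
  moreover have "0 \<le> \<epsilon> * B"
    using assms by simp
  ultimately have "B * (18 * (1 - \<epsilon>)) \<le> N"
    using solvers by (simp add: algebra_simps)
  then show ?thesis
    using assms by (simp add: pos_le_divide_eq)
qed

lemma challenge_round_bad_solvers_bound:
  assumes "\<kappa> \<le> 1/18" and "0 \<le> \<epsilon>" and "\<epsilon> < 1"
    and "challenge_round good \<kappa> \<epsilon> r"
  shows "real (card (solvers r - good)) \<le> real (card (solvers r)) / (18 * (1 - \<epsilon>))"
  using assms challenge_round_card_solvers_ge[OF assms(4)]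
  by (intro bad_fraction_bound[where \<kappa> = \<kappa> and G = "real (card (issued r \<inter> good))"])
    (auto simp: challenge_round_def)

lemma ergo_run_ends_with_challenge_round:
  assumes "ergo_run good \<kappa> \<epsilon> m sys evs pr" and "i \<le> m"
  shows "challenge_round good \<kappa> \<epsilon> (pr i) \<and> sys i = solvers (pr i)"
proof (cases i)
  case 0
  then show ?thesis
    using assms(1) unfolding ergo_run_def by auto
next
  case (Suc j)
  then have "j < m"
    using assms(2) by simp
  then show ?thesis
    using assms(1) Suc unfolding ergo_run_def by blast
qed

theorem lemma8:
  fixes good :: "'id set" and \<kappa> \<epsilon> :: real and m i :: nat
    and sys :: "nat \<Rightarrow> 'id set" and evs :: "nat \<Rightarrow> 'id event list"
    and pr :: "nat \<Rightarrow> 'id chround"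
  assumes "0 \<le> \<kappa>" and "\<kappa> \<le> 1/18" and "0 \<le> \<epsilon>" and "\<epsilon> < 1/12"
    and "ergo_run good \<kappa> \<epsilon> m sys evs pr"
    and "i \<le> m"
  shows "real (card (sys i - good)) \<le> real (card (sys i)) / (18 * (1 - \<epsilon>))"
proof -
  have "challenge_round good \<kappa> \<epsilon> (pr i)" and "sys i = solvers (pr i)"
    using ergo_run_ends_with_challenge_round[OF assms(5,6)] by auto
  moreover have "\<epsilon> < 1"
    using assms(4) by simp
  ultimately show ?thesis
    using challenge_round_bad_solvers_bound assms(2,3) by metis
qed

end
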